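(* Let $G\in\mathrm{PLO}$ be finitely generated. Then there is a series $G'=G_0\supseteq G_1\supseteq\cdots\supseteq G_n=1$ with $G_i\lhd G$ for all $i$, such that for each $i=1,\dots,n$: whenever $A,B$ are finitely generated subgroups of $G_{i-1}/G_i$, there exists $g\in G/G_i$ such that $A^g$ and $B$ centralize each other.
   Context: $\mathrm{PLO}$ is the class of groups isomorphic to a subgroup of $\mathcal{P}$, the group (under composition) of piecewise linear (differentiable except at finitely many points) orientation preserving self-homeomorphisms of $[0,1]$. $G'$ is the commutator subgroup and $A^g=gAg^{-1}$. *)

theory Defs
  imports Complex_Main "HOL-Algebra.Algebra"
begin

text \<open>Piecewise linear orientation-preserving self-homeomorphisms of [0,1].
  To get a genuine group under function composition in HOL, such a map is
  represented by the function on the reals that agrees with it on [0,1] and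
  is the identity outside [0,1].\<close>

definition piecewise_linear_on_unit :: "(real \<Rightarrow> real) \<Rightarrow> bool" where
  "piecewise_linear_on_unit f \<longleftrightarrow>
     (\<exists>xs :: real list. xs \<noteq> [] \<and> sorted_wrt (<) xs \<and> hd xs = 0 \<and> last xs = 1 \<and>
        (\<forall>i. Suc i < length xs \<longrightarrow>
           (\<exists>m c. \<forall>y \<in> {xs ! i .. xs ! Suc i}. f y = m * y + c)))"

definition PL_homeos :: "(real \<Rightarrow> real) set" where
  "PL_homeos = {f. continuous_on {0..1} f \<and> strict_mono_on {0..1} f \<and>
                   f ` {0..1} = {0..1} \<and> piecewise_linear_on_unit f \<and>
                   (\<forall>x. x \<notin> {0..1} \<longrightarrow> f x = x)}"

definition PLgroup :: "(real \<Rightarrow> real) monoid" where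
  "PLgroup = \<lparr>carrier = PL_homeos, monoid.mult = (\<circ>), one = id\<rparr>"

definition PLO :: "('a, 'b) monoid_scheme \<Rightarrow> bool" where
  "PLO G \<longleftrightarrow> (\<exists>H. subgroup H PLgroup \<and> G \<cong> (PLgroup\<lparr>carrier := H\<rparr>))"

definition fin_gen_group :: "('a, 'b) monoid_scheme \<Rightarrow> bool" where
  "fin_gen_group G \<longleftrightarrow> (\<exists>S. finite S \<and> S \<subseteq> carrier G \<and> generate G S = carrier G)"

definition fin_gen_subgroup :: "'a set \<Rightarrow> ('a, 'b) monoid_scheme \<Rightarrow> bool" where
  "fin_gen_subgroup A G \<longleftrightarrow> (\<exists>S. finite S \<and> S \<subseteq> carrier G \<and> A = generate G S)"

end

theory Submission
  imports Defs
begin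

text \<open>Represent \<open>G\<close> faithfully by PL homeomorphisms. As \<open>G\<close> is finitely generated, only finitely
  many breakpoints occur, so there is a finite chain \<open>0 = q\<^sub>0 < \<dots> < q\<^sub>n = 1\<close> of common fixed
  points such that each gap \<open>(a, b)\<close> between consecutive points is either fixed pointwise by \<open>G\<close>
  or free of common fixed points; \<open>G\<^sub>i\<close> consists of the elements of \<open>G'\<close> fixing \<open>[0, q\<^sub>i]\<close>.
  Across a fixed gap the series does not change. Across a free gap, one-sided slopes at common
  fixed points are multiplicative, so finitely many elements of \<open>G'\<close> are the identity near \<open>a\<close>
  and near \<open>b\<close>. Orbits in \<open>(a, b)\<close> accumulate at \<open>b\<close>, so some \<open>h\<close> pushes a neighbourhood of
  \<open>a\<close> close to \<open>b\<close>; then on \<open>[0, b]\<close> the \<open>h\<close>-conjugates of these elements are supported near \<open>b\<close>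
  and the elements themselves away from \<open>b\<close>, so they commute modulo the stabiliser of \<open>[0, b]\<close>.\<close>

section \<open>Finite subsets of ordered sets\<close>

lemma finite_uniform_radius:
  fixes P :: "'a \<Rightarrow> real \<Rightarrow> bool"
  assumes "finite R" "\<And>x. x \<in> R \<Longrightarrow> \<exists>e>0. P x e"
    and "\<And>x e e'. P x e \<Longrightarrow> 0 < e' \<Longrightarrow> e' \<le> e \<Longrightarrow> P x e'"
  shows "\<exists>e>0. \<forall>x\<in>R. P x e"
  using assms(1,2)
proof (induction R rule: finite_induct)
  case empty
  show ?case
    using zero_less_one by blast
next
  case (insert x R)
  obtain e1 where e1: "e1 > 0" "\<forall>y\<in>R. P y e1"
    using insert.IH insert.prems by blast
  obtain e2 where e2: "e2 > 0" "P x e2"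
    using insert.prems by blast
  have "\<forall>y\<in>insert x R. P y (min e1 e2)"
    using e1 e2 assms(3) by auto
  then show ?case
    using e1(1) e2(1) by (intro exI[of _ "min e1 e2"]) auto
qed

lemma finite_gap_around:
  fixes P :: "'a::linorder set"
  assumes "finite P" "a < x" "x < b" "x \<notin> P"
  obtains p q where "a \<le> p" "p < x" "x < q" "q \<le> b" "p \<in> insert a P" "q \<in> insert b P"
    "{p<..<q} \<inter> P = {}"
proof -
  define L where "L = {r \<in> insert a P. a \<le> r \<and> r < x}"
  define U where "U = {r \<in> insert b P. x < r \<and> r \<le> b}"
  have L: "finite L" "a \<in> L" and U: "finite U" "b \<in> U"
    using assms unfolding L_def U_def by auto
  have "Max L \<in> L" "Min U \<in> U"
    using L U by (auto intro: Max_in Min_in)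
  moreover have "{Max L<..<Min U} \<inter> P = {}"
  proof (rule ccontr)
    assume "{Max L<..<Min U} \<inter> P \<noteq> {}"
    then obtain r where r: "r \<in> P" "Max L < r" "r < Min U"
      by auto
    consider "r < x" | "x < r"
      using r(1) assms(4) by fastforce
    then show False
    proof cases
      case 1
      then have "r \<in> L"
        using r \<open>Max L \<in> L\<close> unfolding L_def by auto
      then show False
        using r(2) L(1) by (simp add: Max_ge leD)
    next
      case 2
      then have "r \<in> U"
        using r \<open>Min U \<in> U\<close> unfolding U_def by auto
      then show False
        using r(3) U(1) by (simp add: Min_le leD)
    qed
  qed
  ultimately show ?thesis
    using that[of "Max L" "Min U"] unfolding L_def U_def by auto
qed

lemma finite_enumeration:
  fixes Q :: "'a::linorder set"
  assumes "finite Q" "lo \<in> Q" "hi \<in> Q" "Q \<subseteq> {lo..hi}"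
  obtains n q where "q 0 = lo" "q n = hi" "\<forall>i\<le>n. q i \<in> Q" "\<forall>i<n. q i < q (Suc i)"
    "\<forall>i<n. {q i<..<q (Suc i)} \<inter> Q = {}"
proof -
  define xs where "xs = sorted_list_of_set Q"
  define n where "n = length xs - 1"
  have xs: "set xs = Q" "sorted_wrt (<) xs" "sorted xs"
    unfolding xs_def using assms(1) strict_sorted_list_of_set sorted_sorted_list_of_set by auto
  then have n: "length xs = Suc n"
    unfolding n_def using assms(2) by (cases xs) auto
  have in_Q: "\<forall>i\<le>n. xs ! i \<in> Q"
    using xs(1) n by auto
  have mono: "xs ! i \<le> xs ! j" if "i \<le> j" "j \<le> n" for i j
    using sorted_nth_mono[OF xs(3) that(1)] that(2) n by simp
  have "xs ! 0 = lo"
  proof -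
    obtain k where "k \<le> n" "xs ! k = lo"
      using assms(2) xs(1) n by (metis in_set_conv_nth less_Suc_eq_le)
    then show ?thesis
      using mono[of 0 k] in_Q assms(4) by force
  qed
  moreover have "xs ! n = hi"
  proof -
    obtain k where "k \<le> n" "xs ! k = hi"
      using assms(3) xs(1) n by (metis in_set_conv_nth less_Suc_eq_le)
    then show ?thesis
      using mono[of k n] in_Q assms(4) by force
  qed
  moreover have "\<forall>i<n. xs ! i < xs ! Suc i"
    using sorted_wrt_nth_less[OF xs(2)] n by simp
  moreover have "\<forall>i<n. {xs ! i<..<xs ! Suc i} \<inter> Q = {}"
  proof (intro allI impI equals0I)
    fix i p
    assume i: "i < n" and p: "p \<in> {xs ! i<..<xs ! Suc i} \<inter> Q"
    then obtain j where "j \<le> n" "p = xs ! j"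
      using xs(1) n by (metis IntD2 in_set_conv_nth less_Suc_eq_le)
    then show False
      using p i mono[of j i] mono[of "Suc i" j] by (cases "j \<le> i") auto
  qed
  ultimately show ?thesis
    using that in_Q by blast
qed

section \<open>Piecewise linear homeomorphisms of the unit interval\<close>

definition unit_partition :: "real list \<Rightarrow> bool" where
  "unit_partition xs \<longleftrightarrow> xs \<noteq> [] \<and> sorted_wrt (<) xs \<and> hd xs = 0 \<and> last xs = 1"

lemma unit_partition_bounds:
  assumes "unit_partition xs" "k < length xs"
  shows "0 \<le> xs ! k" "xs ! k \<le> 1"
proof -
  have sorted: "sorted_wrt (<) xs" and ends: "xs ! 0 = 0" "xs ! (length xs - 1) = 1"
    using assms by (auto simp: unit_partition_def hd_conv_nth last_conv_nth)
  show "0 \<le> xs ! k"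
    using sorted_wrt_nth_less[OF sorted, of 0 k] assms(2) ends by (cases k) auto
  show "xs ! k \<le> 1"
  proof (cases "k < length xs - 1")
    case True
    then show ?thesis using sorted_wrt_nth_less[OF sorted True] ends assms(2) by force
  next
    case False
    then have "k = length xs - 1" using assms(2) by linarith
    then show ?thesis using ends by simp
  qed
qed

lemma unit_partition_segment_right:
  assumes "unit_partition xs" "0 \<le> y" "y < 1"
  obtains i where "Suc i < length xs" "xs ! i \<le> y" "y < xs ! Suc i"
proof -
  have xs: "xs \<noteq> []" "xs ! 0 = 0" "xs ! (length xs - 1) = 1"
    using assms(1) by (auto simp: unit_partition_def hd_conv_nth last_conv_nth)
  define j where "j = (LEAST j. j < length xs \<and> y < xs ! j)"
  have "j < length xs \<and> y < xs ! j"
    unfolding j_def by (rule LeastI[of _ "length xs - 1"]) (use xs assms in auto)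
  moreover have "j \<noteq> 0"
    using calculation xs assms(2) by (intro notI) auto
  then obtain i where i: "j = Suc i" by (cases j) auto
  moreover have "i < (LEAST j. j < length xs \<and> y < xs ! j)"
    using i unfolding j_def by simp
  then have "\<not> (i < length xs \<and> y < xs ! i)"
    by (rule not_less_Least)
  ultimately show ?thesis using that by auto
qed

lemma unit_partition_segment_left:
  assumes "unit_partition xs" "0 < y" "y \<le> 1"
  obtains i where "Suc i < length xs" "xs ! i < y" "y \<le> xs ! Suc i"
proof -
  have xs: "xs \<noteq> []" "xs ! 0 = 0" "xs ! (length xs - 1) = 1"
    using assms(1) by (auto simp: unit_partition_def hd_conv_nth last_conv_nth)
  define j where "j = (LEAST j. j < length xs \<and> y \<le> xs ! j)"
  have "j < length xs \<and> y \<le> xs ! j"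
    unfolding j_def by (rule LeastI[of _ "length xs - 1"]) (use xs assms in auto)
  moreover have "j \<noteq> 0"
    using calculation xs assms(2) by (intro notI) auto
  then obtain i where i: "j = Suc i" by (cases j) auto
  moreover have "i < (LEAST j. j < length xs \<and> y \<le> xs ! j)"
    using i unfolding j_def by simp
  then have "\<not> (i < length xs \<and> y \<le> xs ! i)"
    by (rule not_less_Least)
  ultimately show ?thesis using that by auto
qed

lemma unit_partition_interval_in_segment:
  assumes "unit_partition xs" "0 \<le> u" "u < v" "v \<le> 1" "{u<..<v} \<inter> set xs = {}"
  obtains i where "Suc i < length xs" "{u<..<v} \<subseteq> {xs ! i .. xs ! Suc i}"
proof -
  obtain i where i: "Suc i < length xs" "xs ! i \<le> (u + v) / 2" "(u + v) / 2 < xs ! Suc i"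
    using unit_partition_segment_right[OF assms(1), of "(u + v) / 2"] assms(2-4) by auto
  have "xs ! i \<notin> {u<..<v}" "xs ! Suc i \<notin> {u<..<v}"
    using assms(5) i(1) by auto
  then have "{u<..<v} \<subseteq> {xs ! i .. xs ! Suc i}"
    using i by auto
  with i(1) show ?thesis using that by blast
qed

lemma PL_homeo_piecewise_affine:
  assumes "f \<in> PL_homeos"
  obtains xs where "unit_partition xs"
    "\<And>i. Suc i < length xs \<Longrightarrow> \<exists>m c. \<forall>y\<in>{xs ! i .. xs ! Suc i}. f y = m * y + c"
  using assms unfolding PL_homeos_def piecewise_linear_on_unit_def unit_partition_def by blast

lemma PL_homeo_less:
  assumes "f \<in> PL_homeos" "x < y" "x \<in> {0..1}" "y \<in> {0..1}"
  shows "f x < f y"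
proof -
  have "strict_mono_on {0..1} f"
    using assms(1) unfolding PL_homeos_def by blast
  then show ?thesis
    using assms(2-4) by (simp add: strict_mono_on_def)
qed

lemma PL_homeo_le:
  "f \<in> PL_homeos \<Longrightarrow> x \<le> y \<Longrightarrow> x \<in> {0..1} \<Longrightarrow> y \<in> {0..1} \<Longrightarrow> f x \<le> f y"
  using PL_homeo_less[of f x y] by (cases "x = y") auto

lemma PL_homeo_in_unit: "f \<in> PL_homeos \<Longrightarrow> x \<in> {0..1} \<Longrightarrow> f x \<in> {0..1}"
  unfolding PL_homeos_def by blast

lemma PL_homeo_outside: "f \<in> PL_homeos \<Longrightarrow> x \<notin> {0..1} \<Longrightarrow> f x = x"
  unfolding PL_homeos_def by blast

lemma PL_homeo_0:
  assumes "f \<in> PL_homeos"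
  shows "f 0 = 0"
proof -
  have "(0::real) \<in> f ` {0..1}"
    using assms unfolding PL_homeos_def by auto
  then obtain z where z: "z \<in> {0..1}" "f z = 0"
    by auto
  then show ?thesis
    using PL_homeo_le[OF assms, of 0 z] PL_homeo_in_unit[OF assms, of 0] by auto
qed

lemma PL_homeo_1:
  assumes "f \<in> PL_homeos"
  shows "f 1 = 1"
proof -
  have "(1::real) \<in> f ` {0..1}"
    using assms unfolding PL_homeos_def by auto
  then obtain z where z: "z \<in> {0..1}" "f z = 1"
    by auto
  then show ?thesis
    using PL_homeo_le[OF assms, of z 1] PL_homeo_in_unit[OF assms, of 1] by auto
qed

lemma PL_homeo_in_unit_iff:
  assumes "f \<in> PL_homeos"
  shows "f x \<in> {0..1} \<longleftrightarrow> x \<in> {0..1}"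
  using PL_homeo_in_unit[OF assms, of x] PL_homeo_outside[OF assms, of x] by (cases "x \<in> {0..1}") auto

lemma PL_homeo_inj:
  assumes "f \<in> PL_homeos"
  shows "inj f"
proof (rule injI)
  fix x y
  assume eq: "f x = f y"
  then have same_side: "x \<in> {0..1} \<longleftrightarrow> y \<in> {0..1}"
    using PL_homeo_in_unit_iff[OF assms] by metis
  show "x = y"
  proof (cases "x \<in> {0..1}")
    case True
    then show ?thesis
      using eq same_side PL_homeo_less[OF assms, of x y] PL_homeo_less[OF assms, of y x]
      by (cases x y rule: linorder_cases) auto
  next
    case False
    then show ?thesis
      using eq same_side PL_homeo_outside[OF assms] by metis
  qed
qed

lemma PL_homeo_fixed_interval_ends:
  assumes f: "f \<in> PL_homeos" and pq: "0 \<le> p" "p < q" "q \<le> 1"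
    and fixed: "\<forall>z\<in>{p<..<q}. f z = z"
  shows "f p \<le> p" "q \<le> f q"
proof -
  show "f p \<le> p"
  proof (rule ccontr)
    assume "\<not> f p \<le> p"
    define z where "z = (p + min (f p) q) / 2"
    have "p < z" "z < q" "z < f p"
      using \<open>\<not> f p \<le> p\<close> pq unfolding z_def by auto
    then show False
      using PL_homeo_le[OF f, of p z] fixed pq by auto
  qed
  show "q \<le> f q"
  proof (rule ccontr)
    assume "\<not> q \<le> f q"
    define z where "z = (q + max (f q) p) / 2"
    have "p < z" "z < q" "f q < z"
      using \<open>\<not> q \<le> f q\<close> pq unfolding z_def by auto
    then show False
      using PL_homeo_le[OF f, of z q] fixed pq by auto
  qed
qed

text \<open>The sign \<open>s = 1\<close> or \<open>s = -1\<close> selects the right or the left side of \<open>q\<close>.\<close>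
definition linear_near :: "real \<Rightarrow> real \<Rightarrow> real \<Rightarrow> (real \<Rightarrow> real) \<Rightarrow> bool" where
  "linear_near s q m f \<longleftrightarrow> (\<exists>e>0. \<forall>t\<in>{0..e}. f (q + s * t) = q + s * (m * t))"

lemma linear_near_id: "linear_near s q 1 id"
  unfolding linear_near_def by (auto intro: exI[of _ 1])

lemma linear_near_comp:
  assumes "linear_near s q m1 f1" "linear_near s q m2 f2" "m2 > 0"
  shows "linear_near s q (m1 * m2) (f1 \<circ> f2)"
proof -
  obtain e1 e2 where e1: "e1 > 0" "\<forall>t\<in>{0..e1}. f1 (q + s * t) = q + s * (m1 * t)"
    and e2: "e2 > 0" "\<forall>t\<in>{0..e2}. f2 (q + s * t) = q + s * (m2 * t)"
    using assms(1,2) unfolding linear_near_def by blast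
  have "(f1 \<circ> f2) (q + s * t) = q + s * (m1 * m2 * t)" if t: "t \<in> {0..min e2 (e1 / m2)}" for t
  proof -
    have "m2 * t \<in> {0..e1}"
      using t assms(3) by (auto simp: field_simps)
    then show ?thesis
      using t e1 e2 by (simp add: mult.assoc)
  qed
  then show ?thesis
    unfolding linear_near_def using e1 e2 assms(3) by (intro exI[of _ "min e2 (e1 / m2)"]) auto
qed

lemma linear_near_inverse:
  assumes "linear_near s q m f" "m > 0" "\<And>y. g (f y) = y"
  shows "linear_near s q (1 / m) g"
proof -
  obtain e where e: "e > 0" "\<forall>t\<in>{0..e}. f (q + s * t) = q + s * (m * t)"
    using assms(1) unfolding linear_near_def by blast
  have "g (q + s * t) = q + s * (1 / m * t)" if t: "t \<in> {0..m * e}" for t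
  proof -
    have "t / m \<in> {0..e}"
      using t assms(2) by (auto simp: field_simps)
    then have "f (q + s * (t / m)) = q + s * (m * (t / m))"
      using e(2) by blast
    also have "\<dots> = q + s * t"
      using assms(2) by simp
    finally show ?thesis
      using assms(3) by (metis times_divide_eq_left mult_1)
  qed
  then show ?thesis
    unfolding linear_near_def using e assms(2) by (intro exI[of _ "m * e"]) auto
qed

lemma PL_homeo_linear_near:
  assumes f: "f \<in> PL_homeos" and fq: "f q = q"
    and side: "s = 1 \<and> 0 \<le> q \<and> q < 1 \<or> s = -1 \<and> 0 < q \<and> q \<le> 1"
  shows "\<exists>m>0. linear_near s q m f"
proof -
  obtain xs where xs: "unit_partition xs"
    and affine: "\<And>i. Suc i < length xs \<Longrightarrow> \<exists>m c. \<forall>y\<in>{xs ! i .. xs ! Suc i}. f y = m * y + c"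
    using PL_homeo_piecewise_affine[OF f] by blast
  obtain i e where i: "Suc i < length xs" and e: "e > 0"
    and q_in: "q \<in> {xs ! i .. xs ! Suc i}" and qe_in: "q + s * e \<in> {xs ! i .. xs ! Suc i}"
    using side
  proof (elim disjE conjE)
    assume "s = 1" "0 \<le> q" "q < 1"
    then obtain i where "Suc i < length xs" "xs ! i \<le> q" "q < xs ! Suc i"
      using unit_partition_segment_right[OF xs] by blast
    then show ?thesis
      using that[of i "xs ! Suc i - q"] \<open>s = 1\<close> by auto
  next
    assume "s = -1" "0 < q" "q \<le> 1"
    then obtain i where "Suc i < length xs" "xs ! i < q" "q \<le> xs ! Suc i"
      using unit_partition_segment_left[OF xs] by blast
    then show ?thesis
      using that[of i "q - xs ! i"] \<open>s = -1\<close> by auto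
  qed
  obtain m c where mc: "\<forall>y\<in>{xs ! i .. xs ! Suc i}. f y = m * y + c"
    using affine[OF i] by blast
  have lin: "f (q + s * t) = q + s * (m * t)" if "t \<in> {0..e}" for t
  proof -
    have "q + s * t \<in> {xs ! i .. xs ! Suc i}"
      using that side q_in qe_in by auto
    then show ?thesis
      using mc q_in fq by (simp add: algebra_simps)
  qed
  have "0 \<le> xs ! i" "xs ! Suc i \<le> 1"
    using unit_partition_bounds[OF xs] i by auto
  then have unit: "q \<in> {0..1}" "q + s * e \<in> {0..1}"
    using q_in qe_in by auto
  have "m > 0"
    using side
  proof (elim disjE conjE)
    assume "s = 1"
    then have "f q < f (q + s * e)"
      using PL_homeo_less[OF f] unit e by simp
    then show ?thesis
      using lin[of e] e fq \<open>s = 1\<close> by (simp add: zero_less_mult_iff)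
  next
    assume "s = -1"
    then have "f (q + s * e) < f q"
      using PL_homeo_less[OF f] unit e by simp
    then show ?thesis
      using lin[of e] e fq \<open>s = -1\<close> by (simp add: zero_less_mult_iff)
  qed
  then show ?thesis
    using lin e unfolding linear_near_def by blast
qed

lemma affine_fixed_points:
  fixes f :: "real \<Rightarrow> real"
  assumes "\<forall>y\<in>I. f y = m * y + c"
  obtains "\<forall>y\<in>I. f y = y" | p where "{y\<in>I. f y = y} \<subseteq> {p}"
proof (cases "\<exists>a\<in>I. \<exists>b\<in>I. a \<noteq> b \<and> f a = a \<and> f b = b")
  case True
  then obtain a b where ab: "a \<in> I" "b \<in> I" "a \<noteq> b" "f a = a" "f b = b"
    by blast
  then have "(m - 1) * (a - b) = 0"
    using assms by (simp add: algebra_simps)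
  then have "m = 1" "c = 0"
    using ab assms by auto
  then show ?thesis
    using assms that(1) by simp
next
  case False
  then show ?thesis
    using that(2) by blast
qed

lemma PL_homeo_fixed_or_free:
  assumes f: "f \<in> PL_homeos"
  obtains P where "finite P"
    "\<And>u v. 0 \<le> u \<Longrightarrow> u < v \<Longrightarrow> v \<le> 1 \<Longrightarrow> {u<..<v} \<inter> P = {} \<Longrightarrow>
       {u<..<v} \<subseteq> {z. f z = z} \<or> {u<..<v} \<inter> {z. f z = z} = {}"
proof -
  obtain xs where xs: "unit_partition xs"
    and affine: "\<And>i. Suc i < length xs \<Longrightarrow> \<exists>m c. \<forall>y\<in>{xs ! i .. xs ! Suc i}. f y = m * y + c"
    using PL_homeo_piecewise_affine[OF f] by blast
  have "\<forall>i. \<exists>p. Suc i < length xs \<longrightarrow>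
      (\<forall>y\<in>{xs ! i .. xs ! Suc i}. f y = y) \<or> {y\<in>{xs ! i .. xs ! Suc i}. f y = y} \<subseteq> {p}"
  proof
    fix i
    show "\<exists>p. Suc i < length xs \<longrightarrow>
      (\<forall>y\<in>{xs ! i .. xs ! Suc i}. f y = y) \<or> {y\<in>{xs ! i .. xs ! Suc i}. f y = y} \<subseteq> {p}"
    proof (cases "Suc i < length xs")
      case True
      then obtain m c where "\<forall>y\<in>{xs ! i .. xs ! Suc i}. f y = m * y + c"
        using affine by blast
      then show ?thesis
        by (rule affine_fixed_points) blast+
    qed simp
  qed
  then obtain p where p: "\<forall>i. Suc i < length xs \<longrightarrow>
      (\<forall>y\<in>{xs ! i .. xs ! Suc i}. f y = y) \<or> {y\<in>{xs ! i .. xs ! Suc i}. f y = y} \<subseteq> {p i}"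
    by (rule choice[elim_format]) blast
  define P where "P = set xs \<union> p ` {i. Suc i < length xs}"
  have "{i. Suc i < length xs} \<subseteq> {..<length xs}"
    by auto
  then have "finite P"
    unfolding P_def using finite_subset by blast
  moreover have "{u<..<v} \<subseteq> {z. f z = z} \<or> {u<..<v} \<inter> {z. f z = z} = {}"
    if uv: "0 \<le> u" "u < v" "v \<le> 1" "{u<..<v} \<inter> P = {}" for u v
  proof -
    obtain i where i: "Suc i < length xs" "{u<..<v} \<subseteq> {xs ! i .. xs ! Suc i}"
    proof (rule unit_partition_interval_in_segment[OF xs uv(1-3)])
      show "{u<..<v} \<inter> set xs = {}"
        using uv(4) unfolding P_def by blast
    qed
    have "p i \<notin> {u<..<v}"
      using uv(4) i(1) unfolding P_def by blast
    from p i(1) consider "\<forall>y\<in>{xs ! i .. xs ! Suc i}. f y = y"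
      | "{y\<in>{xs ! i .. xs ! Suc i}. f y = y} \<subseteq> {p i}"
      by blast
    then show ?thesis
    proof cases
      case 1
      then show ?thesis using i(2) by blast
    next
      case 2
      then show ?thesis using i(2) \<open>p i \<notin> {u<..<v}\<close> by blast
    qed
  qed
  ultimately show ?thesis
    using that by presburger
qed

section \<open>Conjugates centralizing in a quotient group\<close>

definition centralizes :: "('a, 'b) monoid_scheme \<Rightarrow> 'a set \<Rightarrow> 'a set \<Rightarrow> bool" where
  "centralizes G A B \<longleftrightarrow> (\<forall>a\<in>A. \<forall>b\<in>B. a \<otimes>\<^bsub>G\<^esub> b = b \<otimes>\<^bsub>G\<^esub> a)"

lemma (in group) commutator_in_derived:
  assumes "x \<in> carrier G" "y \<in> carrier G"
  shows "x \<otimes> y \<otimes> inv x \<otimes> inv y \<in> derived G (carrier G)"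
  unfolding derived_def using assms by (intro generate.incl) blast

lemma (in group) centralizer_subgroup:
  assumes "T \<subseteq> carrier G"
  shows "subgroup {p \<in> carrier G. \<forall>t\<in>T. p \<otimes> t = t \<otimes> p} G"
proof (rule subgroupI)
  fix p
  assume p: "p \<in> {p \<in> carrier G. \<forall>t\<in>T. p \<otimes> t = t \<otimes> p}"
  have "inv p \<otimes> t = t \<otimes> inv p" if t: "t \<in> T" for t
  proof -
    have t_carrier: "t \<in> carrier G"
      using t assms by blast
    have "inv p \<otimes> t = inv p \<otimes> (t \<otimes> p) \<otimes> inv p"
      using p t_carrier by (simp add: m_assoc)
    also have "\<dots> = inv p \<otimes> (p \<otimes> t) \<otimes> inv p"
      using p t by simp
    also have "\<dots> = t \<otimes> inv p"
      using p t_carrier by (simp add: m_assoc[symmetric])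
    finally show ?thesis .
  qed
  then show "inv p \<in> {p \<in> carrier G. \<forall>t\<in>T. p \<otimes> t = t \<otimes> p}"
    using p by simp
next
  fix p q
  assume p: "p \<in> {p \<in> carrier G. \<forall>t\<in>T. p \<otimes> t = t \<otimes> p}"
    and q: "q \<in> {p \<in> carrier G. \<forall>t\<in>T. p \<otimes> t = t \<otimes> p}"
  have "p \<otimes> q \<otimes> t = t \<otimes> (p \<otimes> q)" if t: "t \<in> T" for t
  proof -
    have t_carrier: "t \<in> carrier G"
      using t assms by blast
    have "p \<otimes> q \<otimes> t = p \<otimes> (t \<otimes> q)"
      using p q t t_carrier by (simp add: m_assoc)
    also have "\<dots> = t \<otimes> (p \<otimes> q)"
      using p q t t_carrier by (simp add: m_assoc[symmetric])
    finally show ?thesis .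
  qed
  then show "p \<otimes> q \<in> {p \<in> carrier G. \<forall>t\<in>T. p \<otimes> t = t \<otimes> p}"
    using p q by simp
qed (use assms in \<open>auto intro!: exI[of _ \<one>]\<close>)

lemma (in group) centralizes_generate:
  assumes "S \<subseteq> carrier G" "T \<subseteq> carrier G" "centralizes G S T"
  shows "centralizes G (generate G S) (generate G T)"
proof -
  have "T \<subseteq> {p \<in> carrier G. \<forall>s\<in>S. p \<otimes> s = s \<otimes> p}"
    using assms unfolding centralizes_def by auto
  then have "generate G T \<subseteq> {p \<in> carrier G. \<forall>s\<in>S. p \<otimes> s = s \<otimes> p}"
    by (rule generate_subgroup_incl[OF _ centralizer_subgroup[OF assms(1)]])
  then have "S \<subseteq> {p \<in> carrier G. \<forall>t\<in>generate G T. p \<otimes> t = t \<otimes> p}"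
    using assms(1) by auto
  then have "generate G S \<subseteq> {p \<in> carrier G. \<forall>t\<in>generate G T. p \<otimes> t = t \<otimes> p}"
    by (rule generate_subgroup_incl[OF _ centralizer_subgroup[OF generate_incl[OF assms(2)]]])
  then show ?thesis
    unfolding centralizes_def by blast
qed

lemma (in group) conjugation_group_hom:
  assumes "g \<in> carrier G"
  shows "group_hom G G (\<lambda>a. g \<otimes> a \<otimes> inv g)"
proof -
  have cancel: "inv g \<otimes> (g \<otimes> x) = x" if "x \<in> carrier G" for x
    using that assms by (simp add: m_assoc[symmetric])
  have "g \<otimes> (a \<otimes> b) \<otimes> inv g = g \<otimes> a \<otimes> inv g \<otimes> (g \<otimes> b \<otimes> inv g)"
    if "a \<in> carrier G" "b \<in> carrier G" for a b
    using that assms by (simp add: m_assoc cancel)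
  then show ?thesis
    using assms by unfold_locales (auto simp: hom_def)
qed

lemma (in group) conjugate_generate:
  assumes "g \<in> carrier G" "S \<subseteq> carrier G"
  shows "(\<lambda>a. g \<otimes> a \<otimes> inv g) ` generate G S = generate G ((\<lambda>a. g \<otimes> a \<otimes> inv g) ` S)"
  using group_hom.generate_img[OF conjugation_group_hom[OF assms(1)] assms(2)] by simp

lemma (in group) conjugate_centralizes_generate:
  assumes "g \<in> carrier G" "S \<subseteq> carrier G" "T \<subseteq> carrier G"
    and "centralizes G ((\<lambda>a. g \<otimes> a \<otimes> inv g) ` S) T"
  shows "centralizes G ((\<lambda>a. g \<otimes> a \<otimes> inv g) ` generate G S) (generate G T)"
  unfolding conjugate_generate[OF assms(1,2)]
  by (rule centralizes_generate) (use assms in auto)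

lemma (in normal) rcos_commute:
  assumes "u \<in> carrier G" "y \<in> carrier G" "u \<otimes> y \<otimes> inv u \<otimes> inv y \<in> H"
  shows "(H #> u) <#> (H #> y) = (H #> y) <#> (H #> u)"
proof -
  have "(u \<otimes> y) \<otimes> inv (y \<otimes> u) = u \<otimes> y \<otimes> inv u \<otimes> inv y"
    using assms by (simp add: inv_mult_group m_assoc)
  then have "u \<otimes> y \<in> H #> (y \<otimes> u)"
    using rcos_module_rev[OF is_group] assms by simp
  then have "H #> (y \<otimes> u) = H #> (u \<otimes> y)"
    using repr_independence assms subgroup_axioms by simp
  then show ?thesis
    using assms by (simp add: rcos_sum)
qed

text \<open>Only representatives of the finitely many generators of \<open>A\<close> and \<open>B\<close> matter.\<close>
lemma (in normal) FactGroup_conjugate_centralizes: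
  assumes A: "fin_gen_subgroup A (G Mod H)" and B: "fin_gen_subgroup B (G Mod H)"
    and AB: "A \<union> B \<subseteq> (\<lambda>x. H #> x) ` M" and M: "M \<subseteq> carrier G"
    and conj: "\<And>R. finite R \<Longrightarrow> R \<subseteq> M \<Longrightarrow> \<exists>h\<in>carrier G. \<forall>x\<in>R. \<forall>y\<in>R.
        (h \<otimes> x \<otimes> inv h) \<otimes> y \<otimes> inv (h \<otimes> x \<otimes> inv h) \<otimes> inv y \<in> H"
  shows "\<exists>g\<in>carrier (G Mod H). centralizes (G Mod H)
    ((\<lambda>a. g \<otimes>\<^bsub>G Mod H\<^esub> a \<otimes>\<^bsub>G Mod H\<^esub> inv\<^bsub>G Mod H\<^esub> g) ` A) B"
proof -
  interpret Q: group "G Mod H"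
    by (rule factorgroup_is_group)
  interpret \<pi>: group_hom G "G Mod H" "\<lambda>x. H #> x"
    by (intro group_hom.intro group_hom_axioms.intro is_group Q.is_group r_coset_hom_Mod)
  obtain SA SB where SA: "finite SA" "SA \<subseteq> carrier (G Mod H)" "A = generate (G Mod H) SA"
    and SB: "finite SB" "SB \<subseteq> carrier (G Mod H)" "B = generate (G Mod H) SB"
    using A B unfolding fin_gen_subgroup_def by blast
  have "SA \<subseteq> A" "SB \<subseteq> B"
    unfolding SA(3) SB(3) by (auto intro: generate.incl)
  then have gens: "SA \<union> SB \<subseteq> (\<lambda>x. H #> x) ` M"
    using AB by blast
  have "finite (SA \<union> SB)"
    using SA(1) SB(1) by simp
  then obtain R where R: "R \<subseteq> M" "finite R" "SA \<union> SB = (\<lambda>x. H #> x) ` R"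
    using finite_subset_image[OF _ gens] by blast
  obtain h where h: "h \<in> carrier G" and comm: "\<forall>x\<in>R. \<forall>y\<in>R.
      (h \<otimes> x \<otimes> inv h) \<otimes> y \<otimes> inv (h \<otimes> x \<otimes> inv h) \<otimes> inv y \<in> H"
    using conj[OF R(2,1)] by blast
  define g where "g = H #> h"
  have g: "g \<in> carrier (G Mod H)"
    unfolding g_def using h by (simp add: carrier_FactGroup)
  have "(g \<otimes>\<^bsub>G Mod H\<^esub> s \<otimes>\<^bsub>G Mod H\<^esub> inv\<^bsub>G Mod H\<^esub> g) \<otimes>\<^bsub>G Mod H\<^esub> b =
      b \<otimes>\<^bsub>G Mod H\<^esub> (g \<otimes>\<^bsub>G Mod H\<^esub> s \<otimes>\<^bsub>G Mod H\<^esub> inv\<^bsub>G Mod H\<^esub> g)"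
    if "s \<in> SA" "b \<in> SB" for s b
  proof -
    have "s \<in> (\<lambda>x. H #> x) ` R" "b \<in> (\<lambda>x. H #> x) ` R"
      using that unfolding R(3)[symmetric] by auto
    then obtain x y where xy: "x \<in> R" "y \<in> R" "s = H #> x" "b = H #> y"
      by blast
    have carrier: "x \<in> carrier G" "y \<in> carrier G"
      using xy R(1) M by auto
    have "g \<otimes>\<^bsub>G Mod H\<^esub> s \<otimes>\<^bsub>G Mod H\<^esub> inv\<^bsub>G Mod H\<^esub> g = H #> (h \<otimes> x \<otimes> inv h)"
      unfolding g_def xy(3) using h carrier by (simp add: \<pi>.hom_mult \<pi>.hom_inv)
    then show ?thesis
      unfolding xy(4) using rcos_commute[of "h \<otimes> x \<otimes> inv h" y] comm xy h carrier by simp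
  qed
  then have "centralizes (G Mod H) ((\<lambda>a. g \<otimes>\<^bsub>G Mod H\<^esub> a \<otimes>\<^bsub>G Mod H\<^esub> inv\<^bsub>G Mod H\<^esub> g) ` SA) SB"
    unfolding centralizes_def by blast
  then have "centralizes (G Mod H) ((\<lambda>a. g \<otimes>\<^bsub>G Mod H\<^esub> a \<otimes>\<^bsub>G Mod H\<^esub> inv\<^bsub>G Mod H\<^esub> g) ` A) B"
    unfolding SA(3) SB(3) by (rule Q.conjugate_centralizes_generate[OF g SA(2) SB(2)])
  then show ?thesis
    using g by blast
qed

section \<open>Groups acting faithfully by PL homeomorphisms\<close>

locale faithful_PL_action = group G for G (structure) +
  fixes \<phi> :: "'a \<Rightarrow> real \<Rightarrow> real"
  assumes action_mult: "x \<in> carrier G \<Longrightarrow> y \<in> carrier G \<Longrightarrow> \<phi> (x \<otimes> y) = \<phi> x \<circ> \<phi> y"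
    and action_PL: "x \<in> carrier G \<Longrightarrow> \<phi> x \<in> PL_homeos"
    and action_inj: "inj_on \<phi> (carrier G)"
begin

definition Fix :: "real set" where
  "Fix = {x. \<forall>g\<in>carrier G. \<phi> g x = x}"

definition fixer :: "real set \<Rightarrow> 'a set" where
  "fixer Y = {g \<in> carrier G. \<forall>x\<in>Y. \<phi> g x = x}"

lemma action_one: "\<phi> \<one> = id"
proof
  fix y
  have "\<phi> \<one> (\<phi> \<one> y) = \<phi> \<one> y"
    using action_mult[of \<one> \<one>] by (metis comp_apply one_closed l_one)
  then show "\<phi> \<one> y = id y"
    using PL_homeo_inj[OF action_PL[OF one_closed]] by (simp add: inj_eq)
qed

lemma action_mult_apply: "x \<in> carrier G \<Longrightarrow> y \<in> carrier G \<Longrightarrow> \<phi> (x \<otimes> y) z = \<phi> x (\<phi> y z)"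
  by (simp add: action_mult)

lemma action_inv_left: "g \<in> carrier G \<Longrightarrow> \<phi> (inv g) (\<phi> g y) = y"
  by (metis action_mult_apply action_one id_apply inv_closed l_inv)

lemma action_inv_right: "g \<in> carrier G \<Longrightarrow> \<phi> g (\<phi> (inv g) y) = y"
  by (metis action_mult_apply action_one id_apply inv_closed r_inv)

lemma zero_in_Fix: "0 \<in> Fix" and one_in_Fix: "1 \<in> Fix"
  unfolding Fix_def using PL_homeo_0 PL_homeo_1 action_PL by auto

lemma action_maps_initial_segment:
  assumes "g \<in> carrier G" "b \<in> Fix" "b \<le> 1" "y \<in> {0..b}"
  shows "\<phi> g y \<in> {0..b}"
  using PL_homeo_le[OF action_PL[OF assms(1)], of y b] PL_homeo_in_unit[OF action_PL[OF assms(1)], of y]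
    assms unfolding Fix_def by auto

lemma Fix_interval_ends:
  assumes "0 \<le> p" "p < q" "q \<le> 1" "{p<..<q} \<subseteq> Fix"
  shows "p \<in> Fix" "q \<in> Fix"
proof -
  have fixed: "\<forall>z\<in>{p<..<q}. \<phi> g z = z" if "g \<in> carrier G" for g
    using assms(4) that unfolding Fix_def by blast
  have ends: "\<phi> g p \<le> p" "q \<le> \<phi> g q" if "g \<in> carrier G" for g
    using PL_homeo_fixed_interval_ends[OF action_PL[OF that] assms(1-3) fixed[OF that]] by auto
  have "\<phi> g p = p \<and> \<phi> g q = q" if g: "g \<in> carrier G" for g
  proof -
    have unit: "\<phi> (inv g) p \<in> {0..1}" "\<phi> (inv g) q \<in> {0..1}"
      using PL_homeo_in_unit[OF action_PL[of "inv g"]] g assms(1-3) by auto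
    have "p \<le> \<phi> g p"
      using PL_homeo_le[OF action_PL[OF g] ends(1)[of "inv g"]] unit assms(1-3) g
      by (simp add: action_inv_right)
    moreover have "\<phi> g q \<le> q"
      using PL_homeo_le[OF action_PL[OF g] ends(2)[of "inv g"]] unit assms(1-3) g
      by (simp add: action_inv_right)
    ultimately show ?thesis
      using ends[OF g] by auto
  qed
  then show "p \<in> Fix" "q \<in> Fix"
    unfolding Fix_def by auto
qed

lemma fixer_subgroup: "subgroup (fixer Y) G"
proof (rule subgroupI)
  fix g
  assume g: "g \<in> fixer Y"
  then have "\<phi> (inv g) x = x" if "x \<in> Y" for x
    using action_inv_left[of g x] that unfolding fixer_def by auto
  then show "inv g \<in> fixer Y"
    using g unfolding fixer_def by auto
next
  fix g h
  assume "g \<in> fixer Y" "h \<in> fixer Y"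
  then show "g \<otimes> h \<in> fixer Y"
    unfolding fixer_def by (auto simp: action_mult_apply)
qed (auto simp: fixer_def action_one)

lemma fixer_antimono: "Y \<subseteq> Z \<Longrightarrow> fixer Z \<subseteq> fixer Y"
  unfolding fixer_def by auto

lemma fixer_initial_segment_normal:
  assumes "b \<in> Fix" "b \<le> 1"
  shows "fixer {0..b} \<lhd> G"
proof -
  have "x \<otimes> g \<otimes> inv x \<in> fixer {0..b}" if x: "x \<in> carrier G" and g: "g \<in> fixer {0..b}" for x g
  proof -
    have "\<phi> (x \<otimes> g \<otimes> inv x) y = y" if y: "y \<in> {0..b}" for y
    proof -
      have "\<phi> g (\<phi> (inv x) y) = \<phi> (inv x) y"
        using g action_maps_initial_segment[of "inv x" b y] x y assms unfolding fixer_def by auto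
      then show ?thesis
        using x g action_inv_right[OF x] unfolding fixer_def by (simp add: action_mult_apply)
    qed
    then show ?thesis
      using x g unfolding fixer_def by auto
  qed
  then show ?thesis
    using normal_inv_iff fixer_subgroup by blast
qed

lemma fixer_trivial: "fixer {0..0} = carrier G"
  unfolding fixer_def using PL_homeo_0 action_PL by auto

lemma fixer_unit_interval: "fixer {0..1} = {\<one>}"
proof
  show "fixer {0..1} \<subseteq> {\<one>}"
  proof
    fix g
    assume g: "g \<in> fixer {0..1}"
    then have "\<phi> g y = \<phi> \<one> y" for y
      using PL_homeo_outside[OF action_PL, of g y] action_one unfolding fixer_def
      by (cases "y \<in> {0..1}") auto
    then show "g \<in> {\<one>}"
      using inj_onD[OF action_inj, of g \<one>] g unfolding fixer_def by auto
  qed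
  show "{\<one>} \<subseteq> fixer {0..1}"
    using subgroup.one_closed[OF fixer_subgroup] by simp
qed

text \<open>The series of the theorem is \<open>G\<^sub>i = derived_fixer q\<^sub>i\<close> for a chain of common fixed points.\<close>
definition derived_fixer :: "real \<Rightarrow> 'a set" where
  "derived_fixer b = derived G (carrier G) \<inter> fixer {0..b}"

lemma derived_fixer_normal:
  assumes "b \<in> Fix" "b \<le> 1"
  shows "derived_fixer b \<lhd> G"
  unfolding derived_fixer_def
  by (intro normal_subgroup_intersect derived_self_is_normal fixer_initial_segment_normal assms)

lemma derived_fixer_antimono: "a \<le> b \<Longrightarrow> derived_fixer b \<subseteq> derived_fixer a"
  unfolding derived_fixer_def using fixer_antimono[of "{0..a}" "{0..b}"] by auto

lemma derived_fixer_zero: "derived_fixer 0 = derived G (carrier G)"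
  unfolding derived_fixer_def using fixer_trivial derived_in_carrier by auto

lemma derived_fixer_one: "derived_fixer 1 = {\<one>}"
  unfolding derived_fixer_def using fixer_unit_interval subgroup.one_closed[OF derived_is_subgroup] by auto

text \<open>One-sided slopes at a common fixed point are multiplicative, so commutators have slope 1.\<close>
lemma derived_linear_near_one:
  assumes q: "q \<in> Fix" and side: "s = 1 \<and> 0 \<le> q \<and> q < 1 \<or> s = -1 \<and> 0 < q \<and> q \<le> 1"
    and g: "g \<in> derived G (carrier G)"
  shows "linear_near s q 1 (\<phi> g)"
proof -
  define Z where "Z = {g \<in> carrier G. linear_near s q 1 (\<phi> g)}"
  have Z: "subgroup Z G"
  proof (rule subgroupI)
    fix g
    assume "g \<in> Z"
    then show "inv g \<in> Z"
      using linear_near_inverse[of s q 1 "\<phi> g" "\<phi> (inv g)"] action_inv_left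
      unfolding Z_def by simp
  next
    fix g h
    assume "g \<in> Z" "h \<in> Z"
    then show "g \<otimes> h \<in> Z"
      using linear_near_comp[of s q 1 "\<phi> g" 1 "\<phi> h"] unfolding Z_def by (simp add: action_mult)
  qed (auto simp: Z_def action_one linear_near_id)
  have slope: "\<exists>m>0. linear_near s q m (\<phi> h)" if "h \<in> carrier G" for h
    using PL_homeo_linear_near[OF action_PL[OF that] _ side] q that unfolding Fix_def by blast
  have "derived_set G (carrier G) \<subseteq> Z"
  proof safe
    fix h k
    assume hk: "h \<in> carrier G" "k \<in> carrier G"
    obtain m1 m2 where m: "m1 > 0" "m2 > 0"
      and h: "linear_near s q m1 (\<phi> h)" and k: "linear_near s q m2 (\<phi> k)"
      using slope hk by blast
    have "linear_near s q (1 / m1) (\<phi> (inv h))" "linear_near s q (1 / m2) (\<phi> (inv k))"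
      using linear_near_inverse[OF h m(1)] linear_near_inverse[OF k m(2)] action_inv_left hk by auto
    then have "linear_near s q (m1 * m2 * (1 / m1) * (1 / m2)) (\<phi> h \<circ> \<phi> k \<circ> \<phi> (inv h) \<circ> \<phi> (inv k))"
      using m by (intro linear_near_comp h k) auto
    moreover have "m1 * m2 * (1 / m1) * (1 / m2) = 1"
      using m by simp
    ultimately show "h \<otimes> k \<otimes> inv h \<otimes> inv k \<in> Z"
      unfolding Z_def using hk by (simp add: action_mult)
  qed
  then have "derived G (carrier G) \<subseteq> Z"
    unfolding derived_def by (rule generate_subgroup_incl[OF _ Z])
  then show ?thesis
    using g unfolding Z_def by blast
qed

lemma orbit_approaches_fixed_point:
  assumes ab: "0 \<le> a" "b \<le> 1" and free: "{a<..<b} \<inter> Fix = {}"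
    and c: "a < c" "c < b" and d: "d < b"
  shows "\<exists>h\<in>carrier G. d \<le> \<phi> h c"
proof (rule ccontr)
  assume "\<not> ?thesis"
  then have below: "\<forall>h\<in>carrier G. \<phi> h c < d"
    by auto
  define orbit where "orbit = (\<lambda>g. \<phi> g c) ` carrier G"
  define s where "s = Sup orbit"
  have c_unit: "c \<in> {0..1}"
    using ab c by auto
  have orbit_unit: "orbit \<subseteq> {0..1}"
    unfolding orbit_def using PL_homeo_in_unit[OF action_PL] c_unit by blast
  have bdd: "bdd_above orbit"
    using orbit_unit by (meson atLeastAtMost_iff bdd_above.I subsetD)
  have c_orbit: "c \<in> orbit"
    unfolding orbit_def using action_one by (auto intro: image_eqI[of _ _ \<one>])
  then have "orbit \<noteq> {}"
    by blast
  have "c \<le> s"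
    unfolding s_def using c_orbit bdd by (rule cSup_upper)
  moreover have "s \<le> d"
    unfolding s_def using below \<open>orbit \<noteq> {}\<close> by (intro cSup_least) (auto simp: orbit_def)
  moreover have s_unit: "s \<in> {0..1}"
    using \<open>c \<le> s\<close> \<open>s \<le> d\<close> c_unit d ab by auto
  text \<open>The supremum of an orbit is pushed up by every group element, hence it is fixed.\<close>
  have up: "s \<le> \<phi> k s" if k: "k \<in> carrier G" for k
    unfolding s_def
  proof (rule cSup_least[OF \<open>orbit \<noteq> {}\<close>])
    fix x
    assume "x \<in> orbit"
    then obtain g where g: "g \<in> carrier G" "x = \<phi> g c"
      unfolding orbit_def by auto
    have "\<phi> (inv k \<otimes> g) c \<in> orbit"
      unfolding orbit_def using g k by auto
    then have "\<phi> k (\<phi> (inv k \<otimes> g) c) \<le> \<phi> k (Sup orbit)"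
      using PL_homeo_le[OF action_PL[OF k]] cSup_upper[OF _ bdd] orbit_unit s_unit
      unfolding s_def by blast
    then show "x \<le> \<phi> k (Sup orbit)"
      using g k by (simp add: action_mult_apply action_inv_right)
  qed
  have "s \<in> Fix"
    unfolding Fix_def
  proof safe
    fix k
    assume k: "k \<in> carrier G"
    have "\<phi> k s \<le> \<phi> k (\<phi> (inv k) s)"
      using up[of "inv k"] PL_homeo_le[OF action_PL[OF k]] PL_homeo_in_unit[OF action_PL[of "inv k"]]
        k s_unit by simp
    then show "\<phi> k s = s"
      using up[OF k] action_inv_right[OF k] by simp
  qed
  ultimately have "s \<in> {a<..<b} \<inter> Fix"
    using c d by auto
  then show False
    using free by blast
qed

lemma conjugate_in_fixer:
  assumes "h \<in> carrier G" "x \<in> fixer {0..c}" "c \<in> {0..1}" "d \<le> \<phi> h c"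
  shows "h \<otimes> x \<otimes> inv h \<in> fixer {0..d}"
proof -
  have "\<phi> (h \<otimes> x \<otimes> inv h) z = z" if z: "z \<in> {0..d}" for z
  proof -
    have hc: "\<phi> h c \<in> {0..1}"
      using PL_homeo_in_unit[OF action_PL] assms by blast
    then have "\<phi> (inv h) z \<le> \<phi> (inv h) (\<phi> h c)"
      using PL_homeo_le[OF action_PL[of "inv h"], of z "\<phi> h c"] assms z by auto
    moreover have "0 \<le> \<phi> (inv h) z"
      using PL_homeo_in_unit[OF action_PL[of "inv h"], of z] hc assms z by auto
    ultimately have "\<phi> x (\<phi> (inv h) z) = \<phi> (inv h) z"
      using assms action_inv_left unfolding fixer_def by auto
    then show ?thesis
      using assms action_inv_right unfolding fixer_def by (simp add: action_mult_apply)
  qed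
  then show ?thesis
    using assms unfolding fixer_def by auto
qed

text \<open>Elements with disjoint supports in \<open>[0, b]\<close> commute there.\<close>
lemma commutator_in_fixer:
  assumes u: "u \<in> fixer {0..d}" and y: "y \<in> fixer {d..b}"
    and b: "b \<in> Fix" "b \<le> 1" and d: "0 \<le> d" "d \<le> b"
  shows "u \<otimes> y \<otimes> inv u \<otimes> inv y \<in> fixer {0..b}"
proof -
  have carrier: "u \<in> carrier G" "y \<in> carrier G"
    using u y unfolding fixer_def by auto
  have y_d: "\<phi> y d = d"
    using y d unfolding fixer_def by auto
  have u_b: "\<phi> u b = b"
    using b carrier unfolding Fix_def by auto
  have commute: "\<phi> u (\<phi> y z) = \<phi> y (\<phi> u z)" if z: "z \<in> {0..b}" for z
  proof (cases "z \<le> d")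
    case True
    then have "\<phi> y z \<in> {0..d}"
      using PL_homeo_le[OF action_PL[OF carrier(2)], of z d] PL_homeo_in_unit[OF action_PL[OF carrier(2)], of z]
        y_d z b d by auto
    then show ?thesis
      using u True z unfolding fixer_def by auto
  next
    case False
    then have "\<phi> u z \<in> {d..b}"
      using PL_homeo_le[OF action_PL[OF carrier(1)], of d z] PL_homeo_le[OF action_PL[OF carrier(1)], of z b]
        u u_b z b d unfolding fixer_def by auto
    then show ?thesis
      using y False z unfolding fixer_def by auto
  qed
  have "\<phi> (u \<otimes> y \<otimes> inv u \<otimes> inv y) z = z" if z: "z \<in> {0..b}" for z
  proof -
    define w where "w = \<phi> (inv u) (\<phi> (inv y) z)"
    have w: "w \<in> {0..b}"
      unfolding w_def using action_maps_initial_segment carrier z b by simp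
    have "\<phi> (u \<otimes> y \<otimes> inv u \<otimes> inv y) z = \<phi> u (\<phi> y w)"
      unfolding w_def using carrier by (simp add: action_mult_apply)
    also have "\<dots> = \<phi> y (\<phi> u w)"
      using commute w by simp
    also have "\<dots> = z"
      unfolding w_def using carrier by (simp add: action_inv_right)
    finally show ?thesis .
  qed
  then show ?thesis
    using carrier unfolding fixer_def by auto
qed

lemma derived_fixer_near_ends:
  assumes R: "finite R" "R \<subseteq> derived G (carrier G)"
    and ab: "a \<in> Fix" "b \<in> Fix" "0 \<le> a" "a < b" "b \<le> 1"
  shows "\<exists>e>0. R \<subseteq> fixer ({a..a + e} \<union> {b - e..b})"
proof -
  have "\<exists>e>0. \<forall>x\<in>R. x \<in> fixer ({a..a + e} \<union> {b - e..b})"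
  proof (rule finite_uniform_radius[OF R(1)])
    fix x
    assume "x \<in> R"
    then have x: "x \<in> carrier G" "x \<in> derived G (carrier G)"
      using R(2) derived_in_carrier by blast+
    obtain e1 where e1: "e1 > 0" "\<forall>t\<in>{0..e1}. \<phi> x (a + t) = a + t"
      using derived_linear_near_one[of a 1, OF ab(1) _ x(2)] ab unfolding linear_near_def by auto
    obtain e2 where e2: "e2 > 0" "\<forall>t\<in>{0..e2}. \<phi> x (b - t) = b - t"
      using derived_linear_near_one[of b "-1", OF ab(2) _ x(2)] ab unfolding linear_near_def by auto
    have "\<phi> x z = z" if "z \<in> {a..a + min e1 e2} \<union> {b - min e1 e2..b}" for z
      using that e1(2)[rule_format, of "z - a"] e2(2)[rule_format, of "b - z"] by auto
    then show "\<exists>e>0. x \<in> fixer ({a..a + e} \<union> {b - e..b})"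
      using e1(1) e2(1) x(1) unfolding fixer_def by (intro exI[of _ "min e1 e2"]) auto
  qed (auto simp: fixer_def)
  then show ?thesis
    by blast
qed

lemma conjugate_commutators_in_fixer:
  assumes ab: "a \<in> Fix" "b \<in> Fix" "0 \<le> a" "a < b" "b \<le> 1"
    and dichotomy: "{a<..<b} \<subseteq> Fix \<or> {a<..<b} \<inter> Fix = {}"
    and R: "finite R" "R \<subseteq> derived_fixer a"
  shows "\<exists>h\<in>carrier G. \<forall>x\<in>R. \<forall>y\<in>R.
    (h \<otimes> x \<otimes> inv h) \<otimes> y \<otimes> inv (h \<otimes> x \<otimes> inv h) \<otimes> inv y \<in> fixer {0..b}"
  using dichotomy
proof
  assume fixed: "{a<..<b} \<subseteq> Fix"
  interpret subgroup "fixer {0..b}" G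
    by (rule fixer_subgroup)
  have "R \<subseteq> fixer {0..b}"
  proof
    fix x
    assume "x \<in> R"
    then have "x \<in> fixer {0..a}"
      using R(2) unfolding derived_fixer_def by blast
    moreover have "{0..b} \<subseteq> {0..a} \<union> {a<..<b} \<union> {b}"
      by auto
    ultimately show "x \<in> fixer {0..b}"
      using fixed ab(2) unfolding fixer_def Fix_def by blast
  qed
  then show ?thesis
    by (intro bexI[of _ \<one>]) (auto simp: subsetD)
next
  assume free: "{a<..<b} \<inter> Fix = {}"
  obtain e where e: "e > 0" and R_ends: "R \<subseteq> fixer ({a..a + e} \<union> {b - e..b})"
    using derived_fixer_near_ends[OF R(1) _ ab] R(2) unfolding derived_fixer_def by blast
  define \<delta> where "\<delta> = min e ((b - a) / 3)"
  have \<delta>: "0 < \<delta>" "\<delta> \<le> e" "3 * \<delta> \<le> b - a"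
    using e ab unfolding \<delta>_def by (auto simp: min_def)
  define c d where "c = a + \<delta>" and "d = b - \<delta>"
  have cd: "a < c" "c < b" "d < b" "0 \<le> d" "d \<le> b" "c \<in> {0..1}"
    using \<delta> ab unfolding c_def d_def by auto
  obtain h where h: "h \<in> carrier G" "d \<le> \<phi> h c"
    using orbit_approaches_fixed_point[OF ab(3,5) free cd(1-3)] by blast
  have "x \<in> fixer {0..c}" "x \<in> fixer {d..b}" if "x \<in> R" for x
  proof -
    have "{0..c} \<subseteq> {0..a} \<union> ({a..a + e} \<union> {b - e..b})" "{d..b} \<subseteq> {a..a + e} \<union> {b - e..b}"
      using \<delta> unfolding c_def d_def by auto
    then show "x \<in> fixer {0..c}" "x \<in> fixer {d..b}"
      using that R(2) R_ends unfolding derived_fixer_def fixer_def by blast+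
  qed
  then have "\<forall>x\<in>R. \<forall>y\<in>R. (h \<otimes> x \<otimes> inv h) \<otimes> y \<otimes> inv (h \<otimes> x \<otimes> inv h) \<otimes> inv y \<in> fixer {0..b}"
    using commutator_in_fixer[OF conjugate_in_fixer[OF h(1) _ cd(6) h(2)] _ ab(2,5) cd(4,5)] by blast
  then show ?thesis
    using h(1) by blast
qed

lemma derived_fixer_quotient_step:
  assumes ab: "a \<in> Fix" "b \<in> Fix" "0 \<le> a" "a < b" "b \<le> 1"
    and dichotomy: "{a<..<b} \<subseteq> Fix \<or> {a<..<b} \<inter> Fix = {}"
    and A: "fin_gen_subgroup A (G Mod derived_fixer b)"
    and B: "fin_gen_subgroup B (G Mod derived_fixer b)"
    and AB: "A \<union> B \<subseteq> (\<lambda>x. derived_fixer b #> x) ` derived_fixer a"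
  shows "\<exists>g\<in>carrier (G Mod derived_fixer b). centralizes (G Mod derived_fixer b)
    ((\<lambda>x. g \<otimes>\<^bsub>G Mod derived_fixer b\<^esub> x \<otimes>\<^bsub>G Mod derived_fixer b\<^esub>
      inv\<^bsub>G Mod derived_fixer b\<^esub> g) ` A) B"
proof (rule normal.FactGroup_conjugate_centralizes[OF derived_fixer_normal[OF ab(2,5)] A B AB])
  show "derived_fixer a \<subseteq> carrier G"
    unfolding derived_fixer_def fixer_def by blast
next
  fix R
  assume R: "finite R" "R \<subseteq> derived_fixer a"
  then obtain h where h: "h \<in> carrier G" and comm: "\<forall>x\<in>R. \<forall>y\<in>R.
      (h \<otimes> x \<otimes> inv h) \<otimes> y \<otimes> inv (h \<otimes> x \<otimes> inv h) \<otimes> inv y \<in> fixer {0..b}"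
    using conjugate_commutators_in_fixer[OF ab dichotomy] by blast
  have "R \<subseteq> carrier G"
    using R(2) unfolding derived_fixer_def fixer_def by blast
  then show "\<exists>h\<in>carrier G. \<forall>x\<in>R. \<forall>y\<in>R.
      (h \<otimes> x \<otimes> inv h) \<otimes> y \<otimes> inv (h \<otimes> x \<otimes> inv h) \<otimes> inv y \<in> derived_fixer b"
    using h comm commutator_in_derived unfolding derived_fixer_def by (auto simp: subsetD)
qed

lemma generators_fixed_or_free:
  assumes "finite S" "S \<subseteq> carrier G" "generate G S = carrier G"
  obtains P where "finite P"
    "\<And>u v. 0 \<le> u \<Longrightarrow> u < v \<Longrightarrow> v \<le> 1 \<Longrightarrow> {u<..<v} \<inter> P = {} \<Longrightarrow>
       {u<..<v} \<subseteq> Fix \<or> {u<..<v} \<inter> Fix = {}"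
proof -
  have "\<forall>s\<in>S. \<exists>P. finite P \<and> (\<forall>u v. 0 \<le> u \<longrightarrow> u < v \<longrightarrow> v \<le> 1 \<longrightarrow> {u<..<v} \<inter> P = {} \<longrightarrow>
      {u<..<v} \<subseteq> {z. \<phi> s z = z} \<or> {u<..<v} \<inter> {z. \<phi> s z = z} = {})"
  proof
    fix s
    assume "s \<in> S"
    then have "\<phi> s \<in> PL_homeos"
      using assms(2) action_PL by blast
    then show "\<exists>P. finite P \<and> (\<forall>u v. 0 \<le> u \<longrightarrow> u < v \<longrightarrow> v \<le> 1 \<longrightarrow> {u<..<v} \<inter> P = {} \<longrightarrow>
      {u<..<v} \<subseteq> {z. \<phi> s z = z} \<or> {u<..<v} \<inter> {z. \<phi> s z = z} = {})"
      by (rule PL_homeo_fixed_or_free) blast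
  qed
  then obtain P where P: "\<forall>s\<in>S. finite (P s) \<and> (\<forall>u v. 0 \<le> u \<longrightarrow> u < v \<longrightarrow> v \<le> 1 \<longrightarrow>
      {u<..<v} \<inter> P s = {} \<longrightarrow> {u<..<v} \<subseteq> {z. \<phi> s z = z} \<or> {u<..<v} \<inter> {z. \<phi> s z = z} = {})"
    by (rule bchoice[elim_format]) blast
  have "{u<..<v} \<subseteq> Fix \<or> {u<..<v} \<inter> Fix = {}"
    if uv: "0 \<le> u" "u < v" "v \<le> 1" "{u<..<v} \<inter> \<Union>(P ` S) = {}" for u v
  proof (rule disjCI)
    assume "{u<..<v} \<inter> Fix \<noteq> {}"
    then obtain x where x: "x \<in> {u<..<v}" "x \<in> Fix"
      by blast
    text \<open>A generator fixing one point of the gap fixes all of it, hence so does the whole group.\<close>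
    have "S \<subseteq> fixer {u<..<v}"
    proof
      fix s
      assume s: "s \<in> S"
      have "\<phi> s x = x"
        using x s assms(2) unfolding Fix_def by blast
      then have "{u<..<v} \<subseteq> {z. \<phi> s z = z}"
        using P s uv x(1) by blast
      then show "s \<in> fixer {u<..<v}"
        using s assms(2) unfolding fixer_def by blast
    qed
    then have "carrier G \<subseteq> fixer {u<..<v}"
      using generate_subgroup_incl[OF _ fixer_subgroup] assms(3) by blast
    then show "{u<..<v} \<subseteq> Fix"
      unfolding fixer_def Fix_def by blast
  qed
  moreover have "finite (\<Union>(P ` S))"
    using P assms(1) by blast
  ultimately show ?thesis
    using that by blast
qed

lemma fixed_points_finite_partition:
  assumes "finite S" "S \<subseteq> carrier G" "generate G S = carrier G"
  obtains Q where "finite Q" "0 \<in> Q" "1 \<in> Q" "Q \<subseteq> Fix \<inter> {0..1}"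
    "\<And>a b. a \<in> Q \<Longrightarrow> b \<in> Q \<Longrightarrow> a < b \<Longrightarrow> {a<..<b} \<inter> Q = {} \<Longrightarrow>
       {a<..<b} \<subseteq> Fix \<or> {a<..<b} \<inter> Fix = {}"
proof -
  obtain P where P: "finite P"
    and gaps: "\<And>u v. 0 \<le> u \<Longrightarrow> u < v \<Longrightarrow> v \<le> 1 \<Longrightarrow> {u<..<v} \<inter> P = {} \<Longrightarrow>
       {u<..<v} \<subseteq> Fix \<or> {u<..<v} \<inter> Fix = {}"
    using generators_fixed_or_free[OF assms] by blast
  define Q where "Q = (P \<union> {0, 1}) \<inter> Fix \<inter> {0..1}"
  have "{a<..<b} \<subseteq> Fix \<or> {a<..<b} \<inter> Fix = {}"
    if ab: "a \<in> Q" "b \<in> Q" "a < b" and gap: "{a<..<b} \<inter> Q = {}" for a b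
  proof (rule disjCI)
    assume "{a<..<b} \<inter> Fix \<noteq> {}"
    then obtain x where x: "a < x" "x < b" "x \<in> Fix"
      by auto
    have "x \<notin> P"
      using x gap ab unfolding Q_def by auto
    text \<open>The gap of \<open>P\<close> around \<open>x\<close> consists of fixed points, so its ends are fixed and hence in \<open>Q\<close>.\<close>
    then obtain p q where pq: "a \<le> p" "p < x" "x < q" "q \<le> b" "p \<in> insert a P" "q \<in> insert b P"
      and P_gap: "{p<..<q} \<inter> P = {}"
      using finite_gap_around[OF P x(1,2)] by blast
    have pq_unit: "0 \<le> p" "p < q" "q \<le> 1"
      using pq ab unfolding Q_def by auto
    moreover have "x \<in> {p<..<q} \<inter> Fix"
      using pq x by auto
    ultimately have fixed: "{p<..<q} \<subseteq> Fix"
      using gaps[OF pq_unit P_gap] by blast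
    then have "p \<in> Fix" "q \<in> Fix"
      using Fix_interval_ends[OF pq_unit] by auto
    then have "p \<in> Q" "q \<in> Q"
      using pq ab pq_unit unfolding Q_def by auto
    then have "p \<notin> {a<..<b}" "q \<notin> {a<..<b}"
      using gap by blast+
    then have "p = a" "q = b"
      using pq x by auto
    then show "{a<..<b} \<subseteq> Fix"
      using fixed by simp
  qed
  moreover have "finite Q" "0 \<in> Q" "1 \<in> Q" "Q \<subseteq> Fix \<inter> {0..1}"
    unfolding Q_def using P zero_in_Fix one_in_Fix by auto
  ultimately show ?thesis
    using that by blast
qed

lemma fixed_point_chain:
  assumes "finite S" "S \<subseteq> carrier G" "generate G S = carrier G"
  obtains n q where "q 0 = 0" "q n = 1" "\<forall>i\<le>n. q i \<in> Fix \<inter> {0..1}" "\<forall>i<n. q i < q (Suc i)"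
    "\<forall>i<n. {q i<..<q (Suc i)} \<subseteq> Fix \<or> {q i<..<q (Suc i)} \<inter> Fix = {}"
proof -
  obtain Q where Q: "finite Q" "0 \<in> Q" "1 \<in> Q" "Q \<subseteq> Fix \<inter> {0..1}"
    and gaps: "\<And>a b. a \<in> Q \<Longrightarrow> b \<in> Q \<Longrightarrow> a < b \<Longrightarrow> {a<..<b} \<inter> Q = {} \<Longrightarrow>
       {a<..<b} \<subseteq> Fix \<or> {a<..<b} \<inter> Fix = {}"
    using fixed_points_finite_partition[OF assms] by blast
  obtain n q where q: "q 0 = 0" "q n = 1" "\<forall>i\<le>n. q i \<in> Q" "\<forall>i<n. q i < q (Suc i)"
    "\<forall>i<n. {q i<..<q (Suc i)} \<inter> Q = {}"
    using finite_enumeration[OF Q(1-3)] Q(4) by (metis inf.boundedE)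
  show ?thesis
  proof (rule that[of q n])
    show "\<forall>i\<le>n. q i \<in> Fix \<inter> {0..1}"
      using q(3) Q(4) by blast
    show "\<forall>i<n. {q i<..<q (Suc i)} \<subseteq> Fix \<or> {q i<..<q (Suc i)} \<inter> Fix = {}"
    proof (intro allI impI)
      fix i
      assume "i < n"
      then show "{q i<..<q (Suc i)} \<subseteq> Fix \<or> {q i<..<q (Suc i)} \<inter> Fix = {}"
        using gaps[of "q i" "q (Suc i)"] q(3-5) by simp
    qed
  qed (use q in auto)
qed

end

lemma PLO_faithful_PL_action:
  assumes "group G" "PLO G"
  obtains \<phi> where "faithful_PL_action G \<phi>"
proof -
  obtain H \<phi> where H: "subgroup H PLgroup" and \<phi>: "\<phi> \<in> iso G (PLgroup\<lparr>carrier := H\<rparr>)"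
    using assms(2) unfolding PLO_def is_iso_def by blast
  have "H \<subseteq> PL_homeos"
    using subgroup.subset[OF H] unfolding PLgroup_def by simp
  then have "faithful_PL_action G \<phi>"
    using assms(1) \<phi> unfolding faithful_PL_action_def faithful_PL_action_axioms_def
    by (auto simp: iso_def hom_def bij_betw_def PLgroup_def)
  then show ?thesis
    using that by blast
qed

theorem lemma4p6:
  fixes G :: "('a, 'b) monoid_scheme"
  assumes "group G" and "PLO G" and "fin_gen_group G"
  shows "\<exists>(n::nat) (Gs :: nat \<Rightarrow> 'a set).
           Gs 0 = derived G (carrier G) \<and> Gs n = {\<one>\<^bsub>G\<^esub>} \<and>
           (\<forall>i\<le>n. Gs i \<lhd> G) \<and>
           (\<forall>i<n. Gs (Suc i) \<subseteq> Gs i) \<and>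
           (\<forall>i\<in>{1..n}. \<forall>A B.
              fin_gen_subgroup A (G Mod Gs i) \<and> fin_gen_subgroup B (G Mod Gs i) \<and>
              A \<subseteq> (\<lambda>x. Gs i #>\<^bsub>G\<^esub> x) ` Gs (i - 1) \<and>
              B \<subseteq> (\<lambda>x. Gs i #>\<^bsub>G\<^esub> x) ` Gs (i - 1) \<longrightarrow>
              (\<exists>g \<in> carrier (G Mod Gs i). \<forall>a\<in>A. \<forall>b\<in>B.
                 (g \<otimes>\<^bsub>G Mod Gs i\<^esub> a \<otimes>\<^bsub>G Mod Gs i\<^esub> inv\<^bsub>G Mod Gs i\<^esub> g) \<otimes>\<^bsub>G Mod Gs i\<^esub> b =
                 b \<otimes>\<^bsub>G Mod Gs i\<^esub> (g \<otimes>\<^bsub>G Mod Gs i\<^esub> a \<otimes>\<^bsub>G Mod Gs i\<^esub> inv\<^bsub>G Mod Gs i\<^esub> g)))"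
proof -
  obtain \<phi> where "faithful_PL_action G \<phi>"
    using PLO_faithful_PL_action[OF assms(1,2)] .
  then interpret faithful_PL_action G \<phi> .
  obtain S where "finite S" "S \<subseteq> carrier G" "generate G S = carrier G"
    using assms(3) unfolding fin_gen_group_def by blast
  then obtain n q where q: "q 0 = 0" "q n = 1" "\<forall>i\<le>n. q i \<in> Fix \<inter> {0..1}" "\<forall>i<n. q i < q (Suc i)"
    and dichotomy: "\<forall>i<n. {q i<..<q (Suc i)} \<subseteq> Fix \<or> {q i<..<q (Suc i)} \<inter> Fix = {}"
    by (rule fixed_point_chain)
  define Gs where "Gs i = derived_fixer (q i)" for i
  have step: "\<exists>g\<in>carrier (G Mod Gs i). centralizes (G Mod Gs i)
      ((\<lambda>a. g \<otimes>\<^bsub>G Mod Gs i\<^esub> a \<otimes>\<^bsub>G Mod Gs i\<^esub> inv\<^bsub>G Mod Gs i\<^esub> g) ` A) B"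
    if "i \<in> {1..n}" "fin_gen_subgroup A (G Mod Gs i)" "fin_gen_subgroup B (G Mod Gs i)"
      "A \<union> B \<subseteq> (\<lambda>x. Gs i #>\<^bsub>G\<^esub> x) ` Gs (i - 1)" for i A B
  proof -
    have "Suc (i - 1) = i" "i - 1 < n"
      using that(1) by auto
    then show ?thesis
      using derived_fixer_quotient_step[of "q (i - 1)" "q i"] that q dichotomy unfolding Gs_def
      by (metis IntD1 IntD2 atLeastAtMost_iff less_imp_le_nat)
  qed
  show ?thesis
  proof (intro exI conjI)
    show "Gs 0 = derived G (carrier G)" "Gs n = {\<one>\<^bsub>G\<^esub>}"
      unfolding Gs_def q(1,2) by (rule derived_fixer_zero derived_fixer_one)+
    show "\<forall>i\<le>n. Gs i \<lhd> G"
      unfolding Gs_def using q(3) derived_fixer_normal by auto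
    show "\<forall>i<n. Gs (Suc i) \<subseteq> Gs i"
      unfolding Gs_def using q(4) derived_fixer_antimono by (simp add: less_imp_le)
  qed (use step in \<open>auto simp: centralizes_def\<close>)
qed

end
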